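(* Let $F$, $G$, $\Pi$ be as in the context. For every $G$-invariant ergodic probability measure $\mu$ on $\Sigma_A\times I$ we have $\chi^G(\mu)=\chi(\Pi_*\mu)$, where $\chi^G(\mu)=\int\log|g_{\omega_0}'(x)|\,d\mu(\omega,x)$ and $\chi(\nu)=\int\log|f_{\xi_0}'(p)|\,d\nu(\xi,p)$. In particular, if $\mu$ is hyperbolic with respect to $G$ (i.e. $\chi^G(\mu)\ne0$), then $\Pi_*\mu$ is hyperbolic with respect to $F$.
   Context: $I=[0,1]$, $R(x)=1-x$. $F(\xi,p)=(\sigma(\xi),f_{\xi_0}(p))$ on $\Sigma_N\times I$, $\Sigma_N=\{1,\ldots,N\}^{\mathbb Z}$, with $f_i$ $C^1$-diffeomorphisms onto their images. $\mathcal I_P$ / $\mathcal I_R$: indices of orientation preserving / reversing $f_i$. $A=(a_{ij})_{i,j=1}^{2N}$ with $a_{ij}=1$ if ($i\in\mathcal I_P$, $j\le N$), or ($i\in\mathcal I_R$, $j>N$), or ($i-N\in\mathcal I_P$, $j>N$), or ($i-N\in\mathcal I_R$, $j\le N$), else $0$; $\Sigma_A$ the $A$-admissible sequences in $\{1,\ldots,2N\}^{\mathbb Z}$ with shift $\sigma_A$; $\pi(\omega)_n=\overline{\omega_n}$ ($\overline i=i$ for $i\le N$, $\overline i=i-N$ otherwise). $G(\omega,x)=(\sigma_A(\omega),g_{\omega_0}(x))$ with $g_i=f_i$, $g_{i+N}=R\circ f_i\circ R$ ($i\in\mathcal I_P$), $g_i=R\circ f_i$, $g_{i+N}=f_i\circ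 R$ ($i\in\mathcal I_R$). $C=\{\omega\colon\omega_0\le N\}$; $\Pi(\omega,x)=(\pi(\omega),x)$ if $\omega\in C$, $(\pi(\omega),R(x))$ otherwise. A measure is hyperbolic if its fiber Lyapunov exponent is nonzero. *)

theory Defs
  imports "HOL-Probability.Probability"
begin

definition II :: "real set" where "II = {0..1}"
definition R :: "real \<Rightarrow> real" where "R x = 1 - x"

text \<open>Derivative of a map of the interval, taken within I (unique at points of I).\<close>
definition dI :: "(real \<Rightarrow> real) \<Rightarrow> real \<Rightarrow> real" where
  "dI h x = (THE d. (h has_real_derivative d) (at x within II))"

definition C1_diffeo_into :: "(real \<Rightarrow> real) \<Rightarrow> bool" where
  "C1_diffeo_into h \<longleftrightarrow> h ` II \<subseteq> II \<and> inj_on h II \<and>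
     (\<exists>d. continuous_on II d \<and> (\<forall>x\<in>II. (h has_real_derivative d x) (at x within II) \<and> d x \<noteq> 0))"

definition IP :: "nat \<Rightarrow> (nat \<Rightarrow> real \<Rightarrow> real) \<Rightarrow> nat set" where
  "IP N f = {i\<in>{1..N}. \<forall>x\<in>II. \<forall>y\<in>II. x < y \<longrightarrow> f i x < f i y}"
definition IR :: "nat \<Rightarrow> (nat \<Rightarrow> real \<Rightarrow> real) \<Rightarrow> nat set" where
  "IR N f = {i\<in>{1..N}. \<forall>x\<in>II. \<forall>y\<in>II. x < y \<longrightarrow> f i y < f i x}"

definition amat :: "nat \<Rightarrow> (nat \<Rightarrow> real \<Rightarrow> real) \<Rightarrow> nat \<Rightarrow> nat \<Rightarrow> bool" where
  "amat N f i j \<longleftrightarrow> i \<in> {1..2*N} \<and> j \<in> {1..2*N} \<and>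
     ((i \<in> IP N f \<and> j \<le> N) \<or> (i \<in> IR N f \<and> j > N) \<or>
      (i > N \<and> i - N \<in> IP N f \<and> j > N) \<or> (i > N \<and> i - N \<in> IR N f \<and> j \<le> N))"

definition shift_space :: "nat \<Rightarrow> (int \<Rightarrow> nat) measure" where
  "shift_space k = PiM UNIV (\<lambda>_. count_space {1..k})"

definition SigmaA :: "nat \<Rightarrow> (nat \<Rightarrow> real \<Rightarrow> real) \<Rightarrow> (int \<Rightarrow> nat) set" where
  "SigmaA N f = {\<omega>. (\<forall>n. \<omega> n \<in> {1..2*N}) \<and> (\<forall>n. amat N f (\<omega> n) (\<omega> (n+1)))}"

definition shift :: "(int \<Rightarrow> nat) \<Rightarrow> (int \<Rightarrow> nat)" where
  "shift \<omega> = (\<lambda>n. \<omega> (n + 1))"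

definition MF :: "nat \<Rightarrow> ((int \<Rightarrow> nat) \<times> real) measure" where
  "MF N = restrict_space (shift_space N \<Otimes>\<^sub>M borel) (space (shift_space N) \<times> II)"
definition MG :: "nat \<Rightarrow> (nat \<Rightarrow> real \<Rightarrow> real) \<Rightarrow> ((int \<Rightarrow> nat) \<times> real) measure" where
  "MG N f = restrict_space (shift_space (2*N) \<Otimes>\<^sub>M borel) (SigmaA N f \<times> II)"

definition Fmap :: "(nat \<Rightarrow> real \<Rightarrow> real) \<Rightarrow> (int \<Rightarrow> nat) \<times> real \<Rightarrow> (int \<Rightarrow> nat) \<times> real" where
  "Fmap f = (\<lambda>(\<xi>, p). (shift \<xi>, f (\<xi> 0) p))"

definition gmap :: "nat \<Rightarrow> (nat \<Rightarrow> real \<Rightarrow> real) \<Rightarrow> nat \<Rightarrow> real \<Rightarrow> real" where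
  "gmap N f k =
     (if k \<le> N then (if k \<in> IP N f then f k else R \<circ> f k)
      else (if k - N \<in> IP N f then R \<circ> f (k - N) \<circ> R else f (k - N) \<circ> R))"

definition Gmap :: "nat \<Rightarrow> (nat \<Rightarrow> real \<Rightarrow> real) \<Rightarrow> (int \<Rightarrow> nat) \<times> real \<Rightarrow> (int \<Rightarrow> nat) \<times> real" where
  "Gmap N f = (\<lambda>(\<omega>, x). (shift \<omega>, gmap N f (\<omega> 0) x))"

definition bar :: "nat \<Rightarrow> nat \<Rightarrow> nat" where
  "bar N i = (if i \<le> N then i else i - N)"
definition piA :: "nat \<Rightarrow> (int \<Rightarrow> nat) \<Rightarrow> (int \<Rightarrow> nat)" where
  "piA N \<omega> = (\<lambda>n. bar N (\<omega> n))"
definition PiMap :: "nat \<Rightarrow> (int \<Rightarrow> nat) \<times> real \<Rightarrow> (int \<Rightarrow> nat) \<times> real" where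
  "PiMap N = (\<lambda>(\<omega>, x). (piA N \<omega>, if \<omega> 0 \<le> N then x else R x))"

definition invariant_prob :: "'a measure \<Rightarrow> ('a \<Rightarrow> 'a) \<Rightarrow> bool" where
  "invariant_prob \<mu> T \<longleftrightarrow> prob_space \<mu> \<and> T \<in> measurable \<mu> \<mu> \<and> distr \<mu> \<mu> T = \<mu>"
definition ergodic_prob :: "'a measure \<Rightarrow> ('a \<Rightarrow> 'a) \<Rightarrow> bool" where
  "ergodic_prob \<mu> T \<longleftrightarrow> invariant_prob \<mu> T \<and>
     (\<forall>A\<in>sets \<mu>. T -` A \<inter> space \<mu> = A \<longrightarrow> measure \<mu> A = 0 \<or> measure \<mu> A = 1)"

definition lyapG :: "nat \<Rightarrow> (nat \<Rightarrow> real \<Rightarrow> real) \<Rightarrow> ((int \<Rightarrow> nat) \<times> real) measure \<Rightarrow> real" where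
  "lyapG N f \<mu> = (\<integral>z. ln \<bar>dI (gmap N f (fst z 0)) (snd z)\<bar> \<partial>\<mu>)"
definition lyapF :: "(nat \<Rightarrow> real \<Rightarrow> real) \<Rightarrow> ((int \<Rightarrow> nat) \<times> real) measure \<Rightarrow> real" where
  "lyapF f \<nu> = (\<integral>z. ln \<bar>dI (f (fst z 0)) (snd z)\<bar> \<partial>\<nu>)"

end

theory Submission
  imports Defs
begin

text \<open>Each g_k is f_k or f_(k-N) composed on the left and/or right with the
  reflection R, whose derivative is -1. By the chain rule |g_(\<omega>_0)'(x)| = |f_(\<xi>_0)'(p)|
  where (\<xi>, p) = \<Pi>(\<omega>, x), so the integrand of \<chi>^G is the integrand of \<chi> composed
  with \<Pi>, and the two exponents agree by the change-of-variables formula for the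
  push-forward \<Pi>_*\<mu>, which for Bochner integrals needs only measurability,
  not integrability.\<close>

lemma at_within_II_neq_bot: "x \<in> II \<Longrightarrow> at x within II \<noteq> bot"
  unfolding II_def
  by (cases "x = 0 \<or> x = 1")
    (auto simp: at_within_Icc_at_right at_within_Icc_at_left at_within_Icc_at)

lemma dI_eqI: "(h has_real_derivative D) (at x within II) \<Longrightarrow> x \<in> II \<Longrightarrow> dI h x = D"
  unfolding dI_def
  by (rule the_equality) (auto intro: has_field_derivative_unique[OF _ _ at_within_II_neq_bot])

lemma C1_diffeo_into_has_dI:
  assumes "C1_diffeo_into h" "x \<in> II"
  shows "(h has_real_derivative dI h x) (at x within II)"
proof -
  obtain d where "\<forall>x\<in>II. (h has_real_derivative d x) (at x within II)"
    using assms(1) unfolding C1_diffeo_into_def by blast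
  then show ?thesis using dI_eqI assms(2) by metis
qed

lemma borel_measurable_dI:
  assumes "C1_diffeo_into h"
  shows "dI h \<in> borel_measurable (restrict_space borel II)"
proof -
  obtain d where d: "continuous_on II d" "\<forall>x\<in>II. (h has_real_derivative d x) (at x within II)"
    using assms unfolding C1_diffeo_into_def by blast
  have "d \<in> borel_measurable (restrict_space borel II)"
    using d(1) by (rule borel_measurable_continuous_on_restrict)
  moreover have "\<And>x. x \<in> space (restrict_space borel II) \<Longrightarrow> dI h x = d x"
    using d(2) dI_eqI by (auto simp: space_restrict_space)
  ultimately show ?thesis using measurable_cong by metis
qed

lemma R_image_II: "R ` II = II"
  unfolding R_def II_def by (auto simp: image_iff intro!: bexI[where x="1 - _"])

lemma R_in_II: "x \<in> II \<Longrightarrow> R x \<in> II"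
  using R_image_II by blast

lemma has_real_derivative_R: "(R has_real_derivative -1) (at x within S)"
  unfolding R_def by (auto intro!: derivative_eq_intros)

lemma dI_R_comp:
  assumes "(h has_real_derivative D) (at x within II)" "x \<in> II"
  shows "dI (R \<circ> h) x = - D"
proof -
  have "(R \<circ> h has_real_derivative (-1) * D) (at x within II)"
    using DERIV_image_chain[OF has_real_derivative_R assms(1)] .
  then show ?thesis using dI_eqI assms(2) by fastforce
qed

lemma has_real_derivative_comp_R:
  assumes "(h has_real_derivative D) (at (R x) within II)"
  shows "(h \<circ> R has_real_derivative D * (-1)) (at x within II)"
proof -
  have "(h has_real_derivative D) (at (R x) within R ` II)"
    using assms R_image_II by simp
  then show ?thesis by (rule DERIV_image_chain[OF _ has_real_derivative_R])
qed

lemma dI_comp_R: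
  assumes "(h has_real_derivative D) (at (R x) within II)" "x \<in> II"
  shows "dI (h \<circ> R) x = - D"
  using dI_eqI[OF has_real_derivative_comp_R[OF assms(1)] assms(2)] by simp

lemma dI_R_comp_R:
  assumes "(h has_real_derivative D) (at (R x) within II)" "x \<in> II"
  shows "dI (R \<circ> h \<circ> R) x = D"
proof -
  have "(R \<circ> h has_real_derivative (-1) * D) (at (R x) within II)"
    using DERIV_image_chain[OF has_real_derivative_R assms(1)] .
  from dI_eqI[OF has_real_derivative_comp_R[OF this] assms(2)] show ?thesis
    by simp
qed

lemma bar_in_range: "i \<in> {1..2*N} \<Longrightarrow> bar N i \<in> {1..N}"
  by (auto simp: bar_def)

lemma abs_dI_gmap:
  assumes diffeo: "\<forall>i\<in>{1..N}. C1_diffeo_into (f i)"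
    and k: "k \<in> {1..2*N}" and x: "x \<in> II"
  shows "\<bar>dI (gmap N f k) x\<bar> = \<bar>dI (f (bar N k)) (if k \<le> N then x else R x)\<bar>"
proof -
  have f: "C1_diffeo_into (f (bar N k))"
    using diffeo bar_in_range[OF k] by blast
  show ?thesis
  proof (cases "k \<le> N")
    case True
    with dI_R_comp[OF C1_diffeo_into_has_dI[OF f x] x] show ?thesis
      by (simp add: gmap_def bar_def)
  next
    case False
    with dI_comp_R[OF C1_diffeo_into_has_dI[OF f R_in_II[OF x]] x]
      dI_R_comp_R[OF C1_diffeo_into_has_dI[OF f R_in_II[OF x]] x]
    show ?thesis
      by (simp add: gmap_def bar_def)
  qed
qed

lemma SigmaA_subset_space: "SigmaA N f \<subseteq> space (shift_space (2*N))"
  unfolding SigmaA_def shift_space_def by (auto simp: space_PiM)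

lemma space_MG: "space (MG N f) = SigmaA N f \<times> II"
  unfolding MG_def SigmaA_def shift_space_def
  by (auto simp: space_restrict_space space_pair_measure space_PiM)

lemma abs_dI_gmap_eq_PiMap:
  assumes "\<forall>i\<in>{1..N}. C1_diffeo_into (f i)" and "z \<in> space (MG N f)"
  shows "\<bar>dI (gmap N f (fst z 0)) (snd z)\<bar> = \<bar>dI (f (fst (PiMap N z) 0)) (snd (PiMap N z))\<bar>"
proof -
  from assms(2) have "fst z 0 \<in> {1..2*N}" "snd z \<in> II"
    by (auto simp: space_MG SigmaA_def)
  from abs_dI_gmap[OF assms(1) this] show ?thesis
    by (simp add: PiMap_def piA_def split: prod.splits)
qed

lemma measurable_piA: "piA N \<in> measurable (shift_space (2*N)) (shift_space N)"
  unfolding shift_space_def piA_def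
proof (rule measurable_PiM_single')
  fix n :: int
  have "bar N \<in> measurable (count_space {1..2*N}) (count_space {1..N})"
    using bar_in_range by auto
  then show "(\<lambda>\<omega>. bar N (\<omega> n)) \<in> measurable (PiM UNIV (\<lambda>_. count_space {1..2*N})) (count_space {1..N})"
    by (rule measurable_compose[OF measurable_component_singleton, rotated]) simp
next
  show "(\<lambda>\<omega> n. bar N (\<omega> n)) \<in> space (PiM UNIV (\<lambda>_. count_space {1..2*N})) \<rightarrow> (\<Pi>\<^sub>E n\<in>UNIV. space (count_space {1..N}))"
    unfolding space_PiM using bar_in_range by fastforce
qed

lemma measurable_PiMap: "PiMap N \<in> measurable (MG N f) (MF N)"
proof -
  have "PiMap N = (\<lambda>z. (piA N (fst z), if fst z 0 \<le> N then snd z else R (snd z)))"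
    by (auto simp: PiMap_def)
  also have "\<dots> \<in> measurable (shift_space (2*N) \<Otimes>\<^sub>M borel) (shift_space N \<Otimes>\<^sub>M borel)"
    using measurable_piA unfolding shift_space_def R_def by measurable
  finally have "PiMap N \<in> measurable (MG N f) (shift_space N \<Otimes>\<^sub>M borel)"
    unfolding MG_def by (rule measurable_restrict_space1)
  moreover have "PiMap N \<in> space (MG N f) \<rightarrow> space (shift_space N) \<times> II"
    using measurable_space[OF measurable_piA[of N]] SigmaA_subset_space[of N f] R_in_II
    by (auto simp: space_MG PiMap_def)
  ultimately show ?thesis
    unfolding MF_def by (intro measurable_restrict_space2)
qed

lemma borel_measurable_lyapF_integrand:
  assumes diffeo: "\<forall>i\<in>{1..N}. C1_diffeo_into (f i)"
  shows "(\<lambda>z. ln \<bar>dI (f (fst z 0)) (snd z)\<bar>) \<in> borel_measurable (MF N)"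
proof (rule measurable_compose_countable'[where I="{1..N}" and f="\<lambda>i z. ln \<bar>dI (f i) (snd z)\<bar>"])
  fix i assume "i \<in> {1..N}"
  then have "dI (f i) \<in> borel_measurable (restrict_space borel II)"
    using diffeo borel_measurable_dI by blast
  moreover have "snd \<in> measurable (MF N) (restrict_space borel II)"
    unfolding MF_def by (rule measurable_restrict_space3) auto
  ultimately show "(\<lambda>z. ln \<bar>dI (f i) (snd z)\<bar>) \<in> borel_measurable (MF N)"
    by measurable
next
  have "(\<lambda>z. fst z 0) \<in> measurable (shift_space N \<Otimes>\<^sub>M borel) (count_space {1..N})"
    unfolding shift_space_def by measurable
  then show "(\<lambda>z. fst z 0) \<in> measurable (MF N) (count_space {1..N})"
    unfolding MF_def by (rule measurable_restrict_space1)
qed simp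

lemma lyapF_distr_PiMap:
  assumes diffeo: "\<forall>i\<in>{1..N}. C1_diffeo_into (f i)"
    and sets_mu: "sets \<mu> = sets (MG N f)"
  shows "lyapF f (distr \<mu> (MF N) (PiMap N)) = lyapG N f \<mu>"
proof -
  have PiMap: "PiMap N \<in> measurable \<mu> (MF N)"
    using measurable_PiMap measurable_cong_sets[OF sets_mu refl] by blast
  have "lyapF f (distr \<mu> (MF N) (PiMap N)) =
        (\<integral>z. ln \<bar>dI (f (fst (PiMap N z) 0)) (snd (PiMap N z))\<bar> \<partial>\<mu>)"
    unfolding lyapF_def by (rule integral_distr[OF PiMap borel_measurable_lyapF_integrand[OF diffeo]])
  also have "\<dots> = lyapG N f \<mu>"
    unfolding lyapG_def
    using abs_dI_gmap_eq_PiMap[OF diffeo] sets_eq_imp_space_eq[OF sets_mu]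
    by (intro Bochner_Integration.integral_cong) auto
  finally show ?thesis .
qed

theorem corollary3p19:
  fixes N :: nat and f :: "nat \<Rightarrow> real \<Rightarrow> real"
    and \<mu> :: "((int \<Rightarrow> nat) \<times> real) measure"
  assumes diffeo: "\<forall>i\<in>{1..N}. C1_diffeo_into (f i)"
    and sets_mu: "sets \<mu> = sets (MG N f)"
    and erg: "ergodic_prob \<mu> (Gmap N f)"
  shows "lyapG N f \<mu> = lyapF f (distr \<mu> (MF N) (PiMap N))
         \<and> (lyapG N f \<mu> \<noteq> 0 \<longrightarrow> lyapF f (distr \<mu> (MF N) (PiMap N)) \<noteq> 0)"
  using lyapF_distr_PiMap[OF diffeo sets_mu] by simp

end
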